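(* Consider the mixed support-set model described in the context, and let $\mathsf p_1,\dots,\mathsf p_h,\mathsf q_1,\dots,\mathsf q_m$ be $h+m$ distinct sensors. Writing $\phi=\frac{T}{N-T}\epsilon$, $$\Pr\Big(i\in\bigcap_{l=1}^{h}\hat{\mathcal T}_{\mathsf p_l},\ i\in\bigcap_{l=1}^{m}\hat{\mathcal T}_{\mathsf q_l}^{\complement}\Big)=(1-\epsilon)^h\epsilon^m\frac{J}{N}+h(1-\epsilon)\phi^{h-1}(1-\phi)^m\frac{I}{N}+m\,\epsilon\,\phi^{h}(1-\phi)^{m-1}\frac{I}{N}+\phi^{h}(1-\phi)^{m}\frac{N-J-(m+h)I}{N}.$$
   Context: Let $N>T\ge1$ be integers and $\Omega=\{1,\dots,N\}$; complements are taken in $\Omega$. A finite set $\mathcal L$ of sensors is given. Mixed support-set model: there are a fixed set $\mathcal J\subseteq\Omega$ with $|\mathcal J|=J$ and, for each sensor $\mathsf p\in\mathcal L$, a fixed set $\mathcal I_{\mathsf p}\subseteq\Omega$ with $|\mathcal I_{\mathsf p}|=I$, such that $\mathcal I_{\mathsf p}\cap\mathcal J=\emptyset$ for all $\mathsf p$, $\mathcal I_{\mathsf p}\cap\mathcal I_{\mathsf q}=\emptyset$ for $\mathsf p\ne\mathsf q$, and the true support set of sensor $\mathsf p$ is $\mathcal T_{\mathsf p}=\mathcal I_{\mathsf p}\cup\mathcal J$; thus $T=I+J$. Each sensor has a random estimated support set $\hat{\mathcal T}_{\mathsf p}\subseteq\Omega$. A random index $i$ is uniformly distributed on $\Omega$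 and independent of all estimates. System model: there is $\epsilon$ with $0\le\epsilon\le (N-T)/N$, common to all sensors, such that for every sensor $\mathsf p$ and every $j\in\Omega$, $\Pr(j\in\hat{\mathcal T}_{\mathsf p})=1-\epsilon$ if $j\in\mathcal T_{\mathsf p}$ and $\Pr(j\in\hat{\mathcal T}_{\mathsf p})=\frac{T}{N-T}\epsilon$ if $j\notin\mathcal T_{\mathsf p}$ (detection probability $1-\epsilon$, miss probability $\epsilon$, false-alarm probability $\frac{T}{N-T}\epsilon$). For each fixed $j\in\Omega$, the events $\{j\in\hat{\mathcal T}_{\mathsf p}\}$, $\mathsf p\in\mathcal L$, are mutually independent. Convention: $0^0=1$ and a term with coefficient $0$ is $0$. *)

theory Defs
  imports "HOL-Probability.Probability"
begin

end

theory Submission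
  imports Defs
begin

text \<open>Since the index \<open>i\<close> is uniform on \<open>\<Omega>\<close> and independent of the estimates, the probability is
  the average over \<open>j \<in> \<Omega>\<close> of the probability that every \<open>p\<^sub>l\<close> detects \<open>j\<close> and every
  \<open>q\<^sub>l\<close> misses it. By independence across sensors this is a product of detection and miss
  probabilities, and it only depends on whether \<open>j\<close> lies in \<open>\<J>\<close>, in the private support of one
  of the \<open>p\<^sub>l\<close> or \<open>q\<^sub>l\<close>, or in none of them. Counting the indices of each kind gives the four
  terms.\<close>

definition hit_miss_event :: "'w set \<Rightarrow> ('a \<Rightarrow> 'w set) \<Rightarrow> 'a set \<Rightarrow> 'a set \<Rightarrow> 'w set" where
  "hit_miss_event \<Omega> A P Q = {w \<in> \<Omega>. (\<forall>p\<in>P. w \<in> A p) \<and> (\<forall>q\<in>Q. w \<notin> A q)}"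

definition hit_miss_weight :: "('a \<Rightarrow> real) \<Rightarrow> 'a set \<Rightarrow> 'a set \<Rightarrow> real" where
  "hit_miss_weight \<pi> P Q = (\<Prod>p\<in>P. \<pi> p) * (\<Prod>q\<in>Q. 1 - \<pi> q)"

lemma hit_miss_event_in_sets:
  assumes "finite P" "finite Q" "\<And>p. p \<in> P \<union> Q \<Longrightarrow> A p \<in> sets N"
  shows "hit_miss_event (space N) A P Q \<in> sets N"
proof -
  have "{w \<in> space N. w \<in> A p} = A p" if "p \<in> P \<union> Q" for p
    using sets.sets_into_space[OF assms(3)[OF that]] by blast
  then show ?thesis
    unfolding hit_miss_event_def using assms(1,2)
    by (intro sets.sets_Collect_conj sets.sets_Collect_finite_All sets.sets_Collect_neg) (auto simp: assms(3))
qed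

lemma hit_miss_event_in_sigma_sets:
  assumes "finite P" "finite Q" "G \<subseteq> Pow \<Omega>" "\<And>p. p \<in> P \<union> Q \<Longrightarrow> A p \<in> G"
  shows "hit_miss_event \<Omega> A P Q \<in> sigma_sets \<Omega> G"
  using hit_miss_event_in_sets[of P Q A "sigma \<Omega> G"] assms by (simp add: sigma_sets.Basic)

lemma (in prob_space) prob_hit_miss_event:
  assumes ind: "indep_events A L" and "finite Q" "finite P" "P \<subseteq> L" "Q \<subseteq> L" "P \<inter> Q = {}"
  shows "prob (hit_miss_event (space M) A P Q) = hit_miss_weight (\<lambda>p. prob (A p)) P Q"
  using assms(2-)
proof (induction Q arbitrary: P rule: finite_induct)
  case empty
  show ?case
  proof (cases "P = {}")
    case True
    then show ?thesis by (simp add: hit_miss_event_def hit_miss_weight_def prob_space)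
  next
    case False
    have "A p \<subseteq> space M" if "p \<in> P" for p
      using ind empty.prems that by (intro sets.sets_into_space) (auto simp: indep_events_def)
    then have "hit_miss_event (space M) A P {} = (\<Inter>p\<in>P. A p)"
      using False by (auto simp: hit_miss_event_def)
    then show ?thesis
      using ind empty.prems False by (simp add: indep_events_def hit_miss_weight_def)
  qed
next
  case (insert q Q)
  have A_events: "A ` L \<subseteq> events" using ind by (simp add: indep_events_def)
  have events: "hit_miss_event (space M) A P' Q \<in> events" if "finite P'" "P' \<subseteq> L" for P'
    using that insert A_events by (intro hit_miss_event_in_sets) auto
  have split: "hit_miss_event (space M) A P (insert q Q) =
      hit_miss_event (space M) A P Q - hit_miss_event (space M) A (insert q P) Q"
    by (auto simp: hit_miss_event_def)
  have "prob (hit_miss_event (space M) A P (insert q Q)) =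
      prob (hit_miss_event (space M) A P Q) - prob (hit_miss_event (space M) A (insert q P) Q)"
    unfolding split using insert.prems insert.hyps
    by (intro finite_measure_Diff events) (auto simp: hit_miss_event_def)
  also have "\<dots> = hit_miss_weight (\<lambda>p. prob (A p)) P (insert q Q)"
    using insert.IH[of P] insert.IH[of "insert q P"] insert.prems insert.hyps
    by (simp add: hit_miss_weight_def algebra_simps)
  finally show ?case .
qed

lemma (in prob_space) prob_at_independent_uniform_index:
  fixes idx :: "'a \<Rightarrow> 'i::countable"
  assumes idx: "idx \<in> measurable M (count_space UNIV)"
    and K: "finite K" "K \<noteq> {}"
    and uniform: "\<And>j. j \<in> K \<Longrightarrow> prob {w \<in> space M. idx w = j} = 1 / card K"
    and E: "\<And>j. E j \<in> events"
    and indep: "\<And>j. j \<in> K \<Longrightarrow>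
      prob ({w \<in> space M. idx w = j} \<inter> E j) = prob {w \<in> space M. idx w = j} * prob (E j)"
  shows "prob {w \<in> space M. w \<in> E (idx w)} = (\<Sum>j\<in>K. prob (E j)) / card K"
proof -
  define D where "D j = {w \<in> space M. idx w = j}" for j
  have D: "D j \<in> events" for j
  proof -
    have "D j = idx -` {j} \<inter> space M" by (auto simp: D_def)
    then show ?thesis using measurable_sets[OF idx] by simp
  qed
  have E_idx: "{w \<in> space M. w \<in> E (idx w)} \<in> events"
    using measurable_compose_countable[where f="\<lambda>j w. w \<in> E j", OF _ idx] E
    by (simp add: pred_def)
  have "prob (\<Union>j\<in>K. D j) = 1"
    using K uniform D by (subst measure_finite_Union) (auto simp: disjoint_family_on_def D_def)
  then have "AE w in M. idx w \<in> K"
    by (auto dest!: AE_prob_1 simp: D_def)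
  then have "prob {w \<in> space M. w \<in> E (idx w)} = prob (\<Union>j\<in>K. D j \<inter> E j)"
    using E_idx D E K by (intro measure_eq_AE) (auto simp: D_def)
  also have "\<dots> = (\<Sum>j\<in>K. prob (D j \<inter> E j))"
    using K D E by (intro measure_finite_Union) (auto simp: disjoint_family_on_def D_def)
  also have "\<dots> = (\<Sum>j\<in>K. prob (E j) / card K)"
    using indep uniform by (simp add: D_def)
  finally show ?thesis
    by (simp add: sum_divide_distrib)
qed

context
  fixes L :: "'a set" and K Jset :: "'b set" and Iset :: "'a \<Rightarrow> 'b set" and P Q :: "'a set"
    and \<pi> :: "'a \<Rightarrow> 'b \<Rightarrow> real" and a b :: real
  assumes sensors: "P \<subseteq> L" "Q \<subseteq> L" "finite P" "finite Q" "P \<inter> Q = {}"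
    and Iset_Jset_disjoint: "\<And>p. p \<in> L \<Longrightarrow> Iset p \<inter> Jset = {}"
    and Iset_disjoint: "\<And>p q. p \<in> L \<Longrightarrow> q \<in> L \<Longrightarrow> p \<noteq> q \<Longrightarrow> Iset p \<inter> Iset q = {}"
    and \<pi>_on_support: "\<And>p j. p \<in> L \<Longrightarrow> j \<in> Iset p \<union> Jset \<Longrightarrow> \<pi> p j = a"
    and \<pi>_off_support: "\<And>p j. p \<in> L \<Longrightarrow> j \<in> K - (Iset p \<union> Jset) \<Longrightarrow> \<pi> p j = b"
begin

lemma hit_miss_weight_common:
  assumes "j \<in> Jset"
  shows "hit_miss_weight (\<lambda>p. \<pi> p j) P Q = a ^ card P * (1 - a) ^ card Q"
  using assms sensors \<pi>_on_support by (simp add: hit_miss_weight_def subset_iff)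

lemma \<pi>_in_other_private_support:
  assumes "p\<^sub>0 \<in> L" "j \<in> Iset p\<^sub>0" "j \<in> K" "p \<in> L" "p \<noteq> p\<^sub>0"
  shows "\<pi> p j = b"
  using assms Iset_disjoint[of p p\<^sub>0] Iset_Jset_disjoint[of p\<^sub>0] by (intro \<pi>_off_support) auto

lemma hit_miss_weight_private_hit:
  assumes p: "p \<in> P" and j: "j \<in> Iset p" "j \<in> K"
  shows "hit_miss_weight (\<lambda>p. \<pi> p j) P Q = a * b ^ (card P - 1) * (1 - b) ^ card Q"
proof -
  have p': "p \<in> L" "p \<notin> Q" using p sensors by blast+
  have others: "\<pi> p' j = b" if "p' \<in> P \<union> Q" "p' \<noteq> p" for p'
    using \<pi>_in_other_private_support[of p j p'] p' j that sensors by blast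
  have "(\<Prod>p'\<in>P. \<pi> p' j) = \<pi> p j * (\<Prod>p'\<in>P - {p}. \<pi> p' j)"
    using p sensors by (simp add: prod.remove)
  also have "\<dots> = a * b ^ (card P - 1)"
    using p p' j sensors \<pi>_on_support others by (simp add: card_Diff_singleton)
  moreover have "\<pi> q j = b" if "q \<in> Q" for q
    using others p' that by auto
  ultimately show ?thesis by (simp add: hit_miss_weight_def)
qed

lemma hit_miss_weight_private_miss:
  assumes q: "q \<in> Q" and j: "j \<in> Iset q" "j \<in> K"
  shows "hit_miss_weight (\<lambda>p. \<pi> p j) P Q = (1 - a) * b ^ card P * (1 - b) ^ (card Q - 1)"
proof -
  have q': "q \<in> L" "q \<notin> P" using q sensors by blast+
  have others: "\<pi> q' j = b" if "q' \<in> P \<union> Q" "q' \<noteq> q" for q'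
    using \<pi>_in_other_private_support[of q j q'] q' j that sensors by blast
  have "(\<Prod>q'\<in>Q. 1 - \<pi> q' j) = (1 - \<pi> q j) * (\<Prod>q'\<in>Q - {q}. 1 - \<pi> q' j)"
    using q sensors by (simp add: prod.remove)
  also have "\<dots> = (1 - a) * (1 - b) ^ (card Q - 1)"
    using q q' j sensors \<pi>_on_support others by (simp add: card_Diff_singleton)
  moreover have "\<pi> p j = b" if "p \<in> P" for p
    using others q' that by auto
  ultimately show ?thesis by (simp add: hit_miss_weight_def)
qed

lemma hit_miss_weight_off_supports:
  assumes "j \<in> K" "j \<notin> Jset" "\<And>p. p \<in> P \<union> Q \<Longrightarrow> j \<notin> Iset p"
  shows "hit_miss_weight (\<lambda>p. \<pi> p j) P Q = b ^ card P * (1 - b) ^ card Q"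
  using assms sensors \<pi>_off_support by (simp add: hit_miss_weight_def subset_iff)

lemma sum_hit_miss_weight:
  assumes K: "finite K" "Jset \<subseteq> K" "\<And>p. p \<in> L \<Longrightarrow> Iset p \<subseteq> K"
    and card_Iset: "\<And>p. p \<in> L \<Longrightarrow> card (Iset p) = I"
  shows "(\<Sum>j\<in>K. hit_miss_weight (\<lambda>p. \<pi> p j) P Q) =
      card Jset * (a ^ card P * (1 - a) ^ card Q)
    + card P * I * (a * b ^ (card P - 1) * (1 - b) ^ card Q)
    + card Q * I * ((1 - a) * b ^ card P * (1 - b) ^ (card Q - 1))
    + (real (card K) - card Jset - (card P + card Q) * I) * (b ^ card P * (1 - b) ^ card Q)"
proof -
  let ?w = "\<lambda>j. hit_miss_weight (\<lambda>p. \<pi> p j) P Q"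
  define U where "U P' = \<Union>(Iset ` P')" for P'
  define R where "R = K - (Jset \<union> U P \<union> U Q)"
  have finite_Iset: "finite (Iset p)" if "p \<in> L" for p
    using K that finite_subset by blast
  have sum_U: "sum f (U P') = (\<Sum>p\<in>P'. sum f (Iset p))" if "P' \<subseteq> L" "finite P'" for P' f
  proof -
    have "\<forall>p\<in>P'. \<forall>q\<in>P'. p \<noteq> q \<longrightarrow> Iset p \<inter> Iset q = {}"
      using that Iset_disjoint by blast
    then show ?thesis
      unfolding U_def using that finite_Iset by (intro sum.UNION_disjoint) auto
  qed
  have card_U: "card (U P') = card P' * I" if "P' \<subseteq> L" "finite P'" for P'
  proof -
    have "card (U P') = (\<Sum>p\<in>P'. card (Iset p))"
      using sum_U[OF that, of "\<lambda>_. 1::nat"] by simp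
    also have "\<dots> = (\<Sum>p\<in>P'. I)"
      using card_Iset that by (intro sum.cong) auto
    finally show ?thesis by simp
  qed
  have sum_U_const: "sum ?w (U P') = card P' * I * c"
    if "P' \<subseteq> L" "finite P'" "\<And>p j. p \<in> P' \<Longrightarrow> j \<in> Iset p \<Longrightarrow> ?w j = c" for P' and c :: real
  proof -
    have "sum ?w (U P') = (\<Sum>p\<in>P'. \<Sum>j\<in>Iset p. c)"
      unfolding sum_U[OF that(1,2)] using that(3) by (intro sum.cong) auto
    also have "\<dots> = (\<Sum>p\<in>P'. I * c)"
      using card_Iset that(1) by (intro sum.cong) auto
    finally show ?thesis by simp
  qed
  have U_sub: "U P \<union> U Q \<subseteq> K" using K sensors by (auto simp: U_def)
  have finite_pieces: "finite Jset" "finite (U P)" "finite (U Q)" "finite R"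
    using K U_sub finite_subset by (auto simp: R_def)
  have disjoint: "Jset \<inter> U P = {}" "(Jset \<union> U P) \<inter> U Q = {}" "(Jset \<union> U P \<union> U Q) \<inter> R = {}"
    using Iset_Jset_disjoint Iset_disjoint sensors by (fastforce simp: U_def R_def)+
  have card_covered: "card (Jset \<union> U P \<union> U Q) = card Jset + (card P + card Q) * I"
    using disjoint finite_pieces card_U sensors by (simp add: card_Un_disjoint algebra_simps)
  have "K = Jset \<union> U P \<union> U Q \<union> R"
    using K U_sub by (auto simp: R_def)
  then have "sum ?w K = sum ?w Jset + sum ?w (U P) + sum ?w (U Q) + sum ?w R"
    using disjoint finite_pieces by (simp add: sum.union_disjoint)
  also have "sum ?w Jset = card Jset * (a ^ card P * (1 - a) ^ card Q)"
    by (simp add: hit_miss_weight_common)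
  also have "sum ?w (U P) = card P * I * (a * b ^ (card P - 1) * (1 - b) ^ card Q)"
    using K sensors by (intro sum_U_const) (blast intro: hit_miss_weight_private_hit)+
  also have "sum ?w (U Q) = card Q * I * ((1 - a) * b ^ card P * (1 - b) ^ (card Q - 1))"
    using K sensors by (intro sum_U_const) (blast intro: hit_miss_weight_private_miss)+
  also have "sum ?w R = card R * (b ^ card P * (1 - b) ^ card Q)"
  proof -
    have "?w j = b ^ card P * (1 - b) ^ card Q" if "j \<in> R" for j
      using that by (intro hit_miss_weight_off_supports) (auto simp: R_def U_def)
    then show ?thesis by simp
  qed
  also have "real (card R) = real (card K) - card Jset - (card P + card Q) * I"
    using K U_sub finite_pieces card_covered card_mono[of K "Jset \<union> U P \<union> U Q"]
    by (simp add: R_def card_Diff_subset of_nat_diff)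
  finally show ?thesis by simp
qed

end

theorem lemma3:
  fixes M :: "'w measure"
    and L :: "'a set"
    and N T I J :: nat
    and \<epsilon> :: real
    and Jset :: "nat set"
    and Iset :: "'a \<Rightarrow> nat set"
    and That :: "'a \<Rightarrow> 'w \<Rightarrow> nat set"
    and idx :: "'w \<Rightarrow> nat"
    and ps qs :: "'a list"
  assumes M: "prob_space M"
    and L_fin: "finite L"
    and NT: "N > T" "T \<ge> 1"
    and eps: "0 \<le> \<epsilon>" "\<epsilon> \<le> (real N - real T) / real N"
    and J_sub: "Jset \<subseteq> {1..N}" and J_card: "card Jset = J"
    and I_sub: "\<And>p. p \<in> L \<Longrightarrow> Iset p \<subseteq> {1..N}"
    and I_card: "\<And>p. p \<in> L \<Longrightarrow> card (Iset p) = I"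
    and IJ_disj: "\<And>p. p \<in> L \<Longrightarrow> Iset p \<inter> Jset = {}"
    and II_disj: "\<And>p q. p \<in> L \<Longrightarrow> q \<in> L \<Longrightarrow> p \<noteq> q \<Longrightarrow> Iset p \<inter> Iset q = {}"
    and T_eq: "T = I + J"
    and est_sub: "\<And>p w. p \<in> L \<Longrightarrow> w \<in> space M \<Longrightarrow> That p w \<subseteq> {1..N}"
    and est_meas: "\<And>p j. p \<in> L \<Longrightarrow> j \<in> {1..N} \<Longrightarrow>
        {w \<in> space M. j \<in> That p w} \<in> sets M"
    and detect: "\<And>p j. p \<in> L \<Longrightarrow> j \<in> Iset p \<union> Jset \<Longrightarrow>
        measure M {w \<in> space M. j \<in> That p w} = 1 - \<epsilon>"
    and false_alarm: "\<And>p j. p \<in> L \<Longrightarrow> j \<in> {1..N} - (Iset p \<union> Jset) \<Longrightarrow>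
        measure M {w \<in> space M. j \<in> That p w} = real T / (real N - real T) * \<epsilon>"
    and indep_sensors: "\<And>j. j \<in> {1..N} \<Longrightarrow>
        prob_space.indep_events M (\<lambda>p. {w \<in> space M. j \<in> That p w}) L"
    and idx_uniform: "\<And>j. j \<in> {1..N} \<Longrightarrow>
        measure M {w \<in> space M. idx w = j} = 1 / real N"
    and idx_indep: "\<And>j E. j \<in> {1..N} \<Longrightarrow>
        E \<in> sigma_sets (space M) {{w \<in> space M. k \<in> That p w} | p k. p \<in> L \<and> k \<in> {1..N}} \<Longrightarrow>
        measure M ({w \<in> space M. idx w = j} \<inter> E) = measure M {w \<in> space M. idx w = j} * measure M E"
    and idx_meas: "idx \<in> measurable M (count_space UNIV)"
    and dist: "distinct (ps @ qs)"
    and ps_L: "set ps \<subseteq> L" and qs_L: "set qs \<subseteq> L"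
  shows "measure M {w \<in> space M. (\<forall>p\<in>set ps. idx w \<in> That p w) \<and>
                                    (\<forall>q\<in>set qs. idx w \<notin> That q w)}
    = (let h = length ps; m = length qs; \<phi> = real T / (real N - real T) * \<epsilon> in
         (1 - \<epsilon>) ^ h * \<epsilon> ^ m * (real J / real N)
       + real h * (1 - \<epsilon>) * \<phi> ^ (h - 1) * (1 - \<phi>) ^ m * (real I / real N)
       + real m * \<epsilon> * \<phi> ^ h * (1 - \<phi>) ^ (m - 1) * (real I / real N)
       + \<phi> ^ h * (1 - \<phi>) ^ m * ((real N - real J - (real m + real h) * real I) / real N))"
proof -
  interpret prob_space M by (rule M)
  define h where "h = length ps"
  define m where "m = length qs"
  define \<phi> where "\<phi> = real T / (real N - real T) * \<epsilon>"
  have ps_qs_disjoint: "set ps \<inter> set qs = {}" using dist by simp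
  define E where "E j = hit_miss_event (space M) (\<lambda>p. {w \<in> space M. j \<in> That p w}) (set ps) (set qs)" for j
  have detection_events: "{w \<in> space M. j \<in> That p w} \<in> events" if p: "p \<in> L" for p j
  proof (cases "j \<in> {1..N}")
    case False
    then have "{w \<in> space M. j \<in> That p w} = {}" using est_sub[OF p] by blast
    then show ?thesis by (metis sets.empty_sets)
  qed (use est_meas p in blast)
  have E_events: "E j \<in> events" for j
    unfolding E_def using ps_L qs_L detection_events by (intro hit_miss_event_in_sets) auto
  have E_generated: "E j \<in> sigma_sets (space M) {{w \<in> space M. k \<in> That p w} | p k. p \<in> L \<and> k \<in> {1..N}}"
    if "j \<in> {1..N}" for j
    unfolding E_def using ps_L qs_L that by (intro hit_miss_event_in_sigma_sets) auto
  have prob_E: "prob (E j) = hit_miss_weight (\<lambda>p. prob {w \<in> space M. j \<in> That p w}) (set ps) (set qs)"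
    if "j \<in> {1..N}" for j
    unfolding E_def using indep_sensors[OF that] ps_L qs_L ps_qs_disjoint by (intro prob_hit_miss_event) auto
  have cards: "card (set ps) = h" "card (set qs) = m" "card {1..N} = N"
    using dist by (simp_all add: h_def m_def distinct_card)
  have weights: "(\<Sum>j\<in>{1..N}. hit_miss_weight (\<lambda>p. prob {w \<in> space M. j \<in> That p w}) (set ps) (set qs)) =
      real J * ((1 - \<epsilon>) ^ h * \<epsilon> ^ m) + real h * real I * ((1 - \<epsilon>) * \<phi> ^ (h - 1) * (1 - \<phi>) ^ m)
      + real m * real I * (\<epsilon> * \<phi> ^ h * (1 - \<phi>) ^ (m - 1))
      + (real N - real J - (real h + real m) * real I) * (\<phi> ^ h * (1 - \<phi>) ^ m)"
    using sum_hit_miss_weight[OF ps_L qs_L List.finite_set List.finite_set ps_qs_disjoint IJ_disj II_disj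
        detect false_alarm[folded \<phi>_def] finite_atLeastAtMost J_sub I_sub I_card] cards J_card
    by simp
  have "measure M {w \<in> space M. (\<forall>p\<in>set ps. idx w \<in> That p w) \<and> (\<forall>q\<in>set qs. idx w \<notin> That q w)}
      = prob {w \<in> space M. w \<in> E (idx w)}"
    by (rule arg_cong[where f = prob]) (auto simp: E_def hit_miss_event_def)
  also have "\<dots> = (\<Sum>j\<in>{1..N}. prob (E j)) / real N"
    using idx_meas idx_uniform E_events NT idx_indep[OF _ E_generated]
    by (subst prob_at_independent_uniform_index[where K = "{1..N}"]) auto
  also have "(\<Sum>j\<in>{1..N}. prob (E j))
      = (\<Sum>j\<in>{1..N}. hit_miss_weight (\<lambda>p. prob {w \<in> space M. j \<in> That p w}) (set ps) (set qs))"
    using prob_E by simp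
  also note weights
  finally show ?thesis
    unfolding Let_def h_def[symmetric] m_def[symmetric] \<phi>_def[symmetric]
    by (rule trans) (simp add: add_divide_distrib diff_divide_distrib algebra_simps)
qed

end
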